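(* $I_n^0$ is a right ideal of $\Omega(B_n)$. Moreover, it is the principal right ideal generated by $X_{\{0\}}$, i.e. $I_n^0=X_{\{0\}}\cdot\Omega(B_n)$.
   Context: Group algebra $\mathbb{Q}B_n$ with product composition $(uv)(i)=u(v(i))$. $B_n$: signed permutations $w=w_1\dots w_n$ (bijections of $\{\pm1,\dots,\pm n\}$ with $w(-i)=-w(i)$), values ordered $\cdots<-2<-1<1<2<\cdots$, $w_0=0$; $\mathrm{Des}(w)=\{i\in\{0,\dots,n-1\}:w_i>w_{i+1}\}$; $X_J=\sum_{\mathrm{Des}(w)\subseteq J}w$; $I_n^0=\mathrm{span}\{X_J: J\subseteq\{0,\dots,n-1\},\,0\in J\}$. A signed composition of $n$ is a sequence $\alpha=(a_1,\dots,a_k)$ of nonzero integers with $|a_1|+\dots+|a_k|=n$. For such $\alpha$, let $T_\alpha$ be the sum of all $w\in B_n$ such that, cutting $[n]$ into successive intervals of lengths $|a_1|,\dots,|a_k|$: on each interval the entries $w_j$ all have sign equal to the sign of the corresponding $a_i$ and $|w_j|$ is increasing, and these intervals are maximal with these two properties. The Mantaci–Reutenauer algebra $\Omega(B_n)$ is $\mathrm{span}\{T_\alpha\}$ over all signed compositions $\alpha$ of $n$; it is a subalgebra of $\mathbb{Q}B_n$ containing $\mathrm{span}\{X_J\}$. *)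

theory Defs
  imports Complex_Main
begin

text \<open>Signed permutations of B_n, as functions on int that are odd, fix 0 and
  every x with |x| > n, and are bijective (hence permute {-n..-1} \<union> {1..n}).\<close>
definition signed_perms :: "nat \<Rightarrow> (int \<Rightarrow> int) set" where
  "signed_perms n = {w. bij w \<and> (\<forall>x. w (- x) = - w x) \<and> (\<forall>x. \<bar>x\<bar> > int n \<longrightarrow> w x = x)}"

text \<open>Elements of the group algebra QB_n: functions B_n -> Q (coefficient of w),
  with product (uv)(i) = u(v(i)), i.e. convolution along composition.\<close>
type_synonym gelem = "(int \<Rightarrow> int) \<Rightarrow> rat"

definition gmult :: "nat \<Rightarrow> gelem \<Rightarrow> gelem \<Rightarrow> gelem" where
  "gmult n f g = (\<lambda>w. \<Sum>u\<in>signed_perms n. \<Sum>v\<in>signed_perms n.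
       if u \<circ> v = w then f u * g v else 0)"

definition qspan :: "gelem set \<Rightarrow> gelem set" where
  "qspan S = {f. \<exists>A c. finite A \<and> A \<subseteq> S \<and> f = (\<lambda>w. \<Sum>x\<in>A. c x * x w)}"

text \<open>Descent set; w_0 = w 0 = 0 since w is odd.\<close>
definition Des :: "nat \<Rightarrow> (int \<Rightarrow> int) \<Rightarrow> nat set" where
  "Des n w = {i. i < n \<and> w (int i) > w (int i + 1)}"

definition XJ :: "nat \<Rightarrow> nat set \<Rightarrow> gelem" where
  "XJ n J = (\<lambda>w. if w \<in> signed_perms n \<and> Des n w \<subseteq> J then 1 else 0)"

definition I0 :: "nat \<Rightarrow> gelem set" where
  "I0 n = qspan {XJ n J | J. J \<subseteq> {0..<n} \<and> 0 \<in> J}"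

definition signed_comps :: "nat \<Rightarrow> int list set" where
  "signed_comps n = {\<alpha>. (\<forall>a\<in>set \<alpha>. a \<noteq> 0) \<and> (\<Sum>a\<leftarrow>\<alpha>. nat \<bar>a\<bar>) = n}"

text \<open>pre \<alpha> i = |a_1| + ... + |a_i|; block i (0-indexed) is positions pre i + 1 .. pre (i+1).\<close>
definition pre :: "int list \<Rightarrow> nat \<Rightarrow> nat" where
  "pre \<alpha> i = (\<Sum>a\<leftarrow>take i \<alpha>. nat \<bar>a\<bar>)"

definition has_shape :: "int list \<Rightarrow> (int \<Rightarrow> int) \<Rightarrow> bool" where
  "has_shape \<alpha> w \<longleftrightarrow>
     (\<forall>i<length \<alpha>. \<forall>j. pre \<alpha> i < j \<and> j \<le> pre \<alpha> (Suc i) \<longrightarrow> sgn (w (int j)) = sgn (\<alpha> ! i)) \<and>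
     (\<forall>i<length \<alpha>. \<forall>j. pre \<alpha> i < j \<and> j < pre \<alpha> (Suc i) \<longrightarrow> \<bar>w (int j)\<bar> < \<bar>w (int j + 1)\<bar>) \<and>
     (\<forall>i. Suc i < length \<alpha> \<longrightarrow>
        \<not> (sgn (\<alpha> ! i) = sgn (\<alpha> ! Suc i) \<and>
           \<bar>w (int (pre \<alpha> (Suc i)))\<bar> < \<bar>w (int (pre \<alpha> (Suc i)) + 1)\<bar>))"

definition T :: "nat \<Rightarrow> int list \<Rightarrow> gelem" where
  "T n \<alpha> = (\<lambda>w. if w \<in> signed_perms n \<and> has_shape \<alpha> w then 1 else 0)"

definition Omega :: "nat \<Rightarrow> gelem set" where
  "Omega n = qspan {T n \<alpha> | \<alpha>. \<alpha> \<in> signed_comps n}"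

end

theory Submission
  imports Defs "HOL-Combinatorics.Permutations" "HOL-Library.Function_Algebras"
begin

text \<open>
  Both spaces consist of the functions on B_n (vanishing outside B_n) that are constant on the
  fibres of a map. For Omega(B_n) the map sends w to the signs of w_1, ..., w_n together with the
  positions j where w_j and w_{j+1} have the same sign and |w_j| < |w_{j+1}|: this data decides
  which T_alpha has w in its support. For n >= 1, Moebius inversion over the X_J with 0 in J
  shows that I_n^0 belongs in the same way to the descent set of the word w_1 ... w_n, which is
  determined by the first map; hence I_n^0 is contained in Omega(B_n).

  For 0 in J, (X_J y)(z) is the sum of y(v) over the v with Des(z v^-1) contained in J. These v
  are parametrised, uniformly in z, by the signs e_i of v_i and the blocks of J containing |v_i|;
  inside a block the |v_i| are ordered like the e_i z_i. Whether v_j, v_{j+1} have the same sign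
  and ascend in absolute value then depends on z only through whether j is a descent of z, so for
  y in Omega(B_n) the sum depends only on the descent set of z. For J = {0} and y the restriction
  of x in I_n^0 to the w with all w_i > 0, only the parameter with all e_i = 1 contributes, and
  the corresponding v has the same descent set as z; hence X_{0} y = x.
\<close>

section \<open>Signed permutations\<close>

lemma signed_perm_odd: "w \<in> signed_perms n \<Longrightarrow> w (- x) = - w x"
  by (simp add: signed_perms_def)

lemma signed_perm_fixes: "w \<in> signed_perms n \<Longrightarrow> int n < \<bar>x\<bar> \<Longrightarrow> w x = x"
  by (simp add: signed_perms_def)

lemma signed_perm_bij: "w \<in> signed_perms n \<Longrightarrow> bij w"
  by (simp add: signed_perms_def)

lemma signed_perm_eq_iff: "w \<in> signed_perms n \<Longrightarrow> w x = w y \<longleftrightarrow> x = y"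
  by (metis signed_perm_bij bij_def inj_eq)

lemma signed_perm_zero: "w \<in> signed_perms n \<Longrightarrow> w 0 = 0"
  using signed_perm_odd[of w n 0] by simp

lemma signed_perm_abs_eq_iff:
  assumes "w \<in> signed_perms n"
  shows "\<bar>w x\<bar> = \<bar>w y\<bar> \<longleftrightarrow> \<bar>x\<bar> = \<bar>y\<bar>"
proof -
  have "\<bar>w x\<bar> = \<bar>w y\<bar> \<longleftrightarrow> w x = w y \<or> w x = w (- y)"
    using signed_perm_odd[OF assms, of y] by (auto simp: abs_eq_iff)
  also have "\<dots> \<longleftrightarrow> \<bar>x\<bar> = \<bar>y\<bar>"
    using signed_perm_eq_iff[OF assms] by (auto simp: abs_eq_iff)
  finally show ?thesis .
qed

lemma signed_perm_abs_bounds: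
  assumes w: "w \<in> signed_perms n" and x: "1 \<le> \<bar>x\<bar>" "\<bar>x\<bar> \<le> int n"
  shows "1 \<le> \<bar>w x\<bar> \<and> \<bar>w x\<bar> \<le> int n"
proof
  have "w x \<noteq> w 0" using x signed_perm_eq_iff[OF w] by auto
  then show "1 \<le> \<bar>w x\<bar>" using signed_perm_zero[OF w] by simp
  show "\<bar>w x\<bar> \<le> int n"
  proof (rule ccontr)
    assume "\<not> \<bar>w x\<bar> \<le> int n"
    then have "w (w x) = w x" using signed_perm_fixes[OF w] by simp
    then have "w x = x" using signed_perm_eq_iff[OF w] by simp
    with x \<open>\<not> \<bar>w x\<bar> \<le> int n\<close> show False by simp
  qed
qed

lemma signed_perms_comp: "u \<in> signed_perms n \<Longrightarrow> v \<in> signed_perms n \<Longrightarrow> u \<circ> v \<in> signed_perms n"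
  unfolding signed_perms_def by (auto intro: bij_comp)

lemma signed_perm_inv_apply:
  assumes "v \<in> signed_perms n"
  shows "inv v (v x) = x" and "v (inv v x) = x"
  using signed_perm_bij[OF assms] by (simp_all add: bij_is_inj bij_is_surj surj_f_inv_f)

lemma signed_perms_inv:
  assumes v: "v \<in> signed_perms n"
  shows "inv v \<in> signed_perms n"
proof -
  have "inv v (- x) = - inv v x" for x
    by (metis signed_perm_inv_apply[OF v] signed_perm_odd[OF v])
  moreover have "inv v x = x" if "int n < \<bar>x\<bar>" for x
    by (metis that signed_perm_inv_apply(1)[OF v] signed_perm_fixes[OF v])
  ultimately show ?thesis
    using bij_imp_bij_inv[OF signed_perm_bij[OF v]] unfolding signed_perms_def by auto
qed

lemma comp_eq_iff_eq_comp_inv: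
  assumes "v \<in> signed_perms n"
  shows "u \<circ> v = z \<longleftrightarrow> u = z \<circ> inv v"
  using signed_perm_inv_apply[OF assms] by (auto simp: fun_eq_iff) metis

lemma signed_perm_eqI:
  assumes v: "v \<in> signed_perms n" and v': "v' \<in> signed_perms n"
    and eq: "\<And>i. 1 \<le> i \<Longrightarrow> i \<le> n \<Longrightarrow> v (int i) = v' (int i)"
  shows "v = v'"
proof
  fix x
  consider "int n < \<bar>x\<bar>" | "x = 0" | "0 < x" "x \<le> int n" | "x < 0" "- x \<le> int n"
    by linarith
  then show "v x = v' x"
  proof cases
    case 3
    then show ?thesis using eq[of "nat x"] by simp
  next
    case 4
    then have "v (- x) = v' (- x)" using eq[of "nat (- x)"] by simp
    then show ?thesis using signed_perm_odd[OF v, of x] signed_perm_odd[OF v', of x] by simp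
  qed (simp_all add: signed_perm_fixes[OF v] signed_perm_fixes[OF v'] signed_perm_zero[OF v]
      signed_perm_zero[OF v'])
qed

lemma signed_perm_permutes:
  assumes w: "w \<in> signed_perms n"
  shows "w permutes {- int n..int n}"
  unfolding permutes_def
proof (intro conjI allI impI)
  show "w x = x" if "x \<notin> {- int n..int n}" for x
    using that signed_perm_fixes[OF w] by auto
  show "\<exists>!x. w x = y" for y
    using signed_perm_bij[OF w] by (simp add: bij_iff)
qed

lemma finite_signed_perms: "finite (signed_perms n)"
  by (rule finite_subset[OF _ finite_permutations[of "{- int n..int n}"]])
    (auto dest: signed_perm_permutes)

lemma signed_perm_abs_bij:
  assumes v: "v \<in> signed_perms n"
  shows "bij_betw (\<lambda>i. nat \<bar>v (int i)\<bar>) {1..n} {1..n}"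
proof -
  have inj: "inj_on (\<lambda>i. nat \<bar>v (int i)\<bar>) {1..n}"
  proof (rule inj_onI)
    fix i j :: nat assume "nat \<bar>v (int i)\<bar> = nat \<bar>v (int j)\<bar>"
    then have "\<bar>v (int i)\<bar> = \<bar>v (int j)\<bar>" by simp
    then show "i = j" unfolding signed_perm_abs_eq_iff[OF v] by simp
  qed
  have "nat \<bar>v (int i)\<bar> \<in> {1..n}" if "i \<in> {1..n}" for i
    using signed_perm_abs_bounds[OF v, of "int i"] that by auto
  then have "(\<lambda>i. nat \<bar>v (int i)\<bar>) ` {1..n} = {1..n}" by (intro endo_inj_surj inj) auto
  with inj show ?thesis by (simp add: bij_betw_def)
qed

definition odd_extension :: "nat \<Rightarrow> (nat \<Rightarrow> int) \<Rightarrow> int \<Rightarrow> int" where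
  "odd_extension n g x = (if 1 \<le> \<bar>x\<bar> \<and> \<bar>x\<bar> \<le> int n then sgn x * g (nat \<bar>x\<bar>) else x)"

lemma odd_extension_apply: "1 \<le> i \<Longrightarrow> i \<le> n \<Longrightarrow> odd_extension n g (int i) = g i"
  by (simp add: odd_extension_def)

lemma odd_extension_signed_perm:
  assumes g: "bij_betw (\<lambda>i. nat \<bar>g i\<bar>) {1..n} {1..n}"
  shows "odd_extension n g \<in> signed_perms n"
proof -
  let ?h = "odd_extension n g" and ?A = "{x. 1 \<le> \<bar>x\<bar> \<and> \<bar>x\<bar> \<le> int n}"
  have g_bounds: "1 \<le> \<bar>g (nat \<bar>x\<bar>)\<bar> \<and> \<bar>g (nat \<bar>x\<bar>)\<bar> \<le> int n" if "x \<in> ?A" for x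
  proof -
    have "nat \<bar>x\<bar> \<in> {1..n}" using that by auto
    then have "nat \<bar>g (nat \<bar>x\<bar>)\<bar> \<in> {1..n}" using bij_betwE[OF g] by blast
    then show ?thesis by (simp add: nat_le_iff le_nat_iff)
  qed
  have abs_h: "\<bar>?h x\<bar> = \<bar>g (nat \<bar>x\<bar>)\<bar>" if "x \<in> ?A" for x
    using that by (auto simp: odd_extension_def abs_mult abs_sgn_eq_1)
  have "inj_on ?h ?A"
  proof (rule inj_onI)
    fix x y assume x: "x \<in> ?A" and y: "y \<in> ?A" and eq: "?h x = ?h y"
    then have "nat \<bar>g (nat \<bar>x\<bar>)\<bar> = nat \<bar>g (nat \<bar>y\<bar>)\<bar>" using abs_h by metis
    moreover have "nat \<bar>x\<bar> \<in> {1..n}" "nat \<bar>y\<bar> \<in> {1..n}" using x y by auto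
    ultimately have "nat \<bar>x\<bar> = nat \<bar>y\<bar>" using inj_onD[OF bij_betw_imp_inj_on[OF g]] by blast
    moreover have "sgn x = sgn y"
      using eq x y g_bounds[OF x] \<open>nat \<bar>x\<bar> = nat \<bar>y\<bar>\<close>
      by (auto simp: odd_extension_def sgn_if split: if_splits)
    ultimately show "x = y" by (metis nat_eq_iff2 abs_ge_zero sgn_mult_abs)
  qed
  moreover have "?h ` ?A \<subseteq> ?A" using abs_h g_bounds by auto
  moreover have "finite ?A" by (rule finite_subset[of _ "{- int n..int n}"]) auto
  ultimately have "bij_betw ?h ?A ?A" by (simp add: bij_betw_def endo_inj_surj)
  then have "?h permutes ?A" by (rule bij_imp_permutes) (auto simp: odd_extension_def)
  then show ?thesis
    unfolding signed_perms_def by (auto dest: permutes_bij simp: odd_extension_def)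
qed

section \<open>Spans and fibre-invariant functions\<close>

definition gscale :: "rat \<Rightarrow> gelem \<Rightarrow> gelem" where
  "gscale r f = (\<lambda>w. r * f w)"

interpretation gelem: module gscale
  by unfold_locales (auto simp: gscale_def fun_eq_iff algebra_simps)

lemma sum_gelem_apply: "(\<Sum>x\<in>A. f x) w = (\<Sum>x\<in>A. f x w :: rat)"
  by (induction A rule: infinite_finite_induct) auto

lemma qspan_eq_span: "qspan S = gelem.span S"
  unfolding qspan_def gelem.span_explicit by (auto simp: sum_gelem_apply gscale_def fun_eq_iff)

definition invariant_functions :: "nat \<Rightarrow> ((int \<Rightarrow> int) \<Rightarrow> 'k) \<Rightarrow> gelem set" where
  "invariant_functions n \<kappa> = {F. (\<forall>w. w \<notin> signed_perms n \<longrightarrow> F w = 0) \<and>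
     (\<forall>w\<in>signed_perms n. \<forall>w'\<in>signed_perms n. \<kappa> w = \<kappa> w' \<longrightarrow> F w = F w')}"

definition fibre_indicator :: "nat \<Rightarrow> ((int \<Rightarrow> int) \<Rightarrow> 'k) \<Rightarrow> 'k \<Rightarrow> gelem" where
  "fibre_indicator n \<kappa> k = (\<lambda>w. if w \<in> signed_perms n \<and> \<kappa> w = k then 1 else 0)"

lemma invariant_functionsI:
  assumes "\<And>w. w \<notin> signed_perms n \<Longrightarrow> F w = 0"
    and "\<And>w w'. w \<in> signed_perms n \<Longrightarrow> w' \<in> signed_perms n \<Longrightarrow> \<kappa> w = \<kappa> w' \<Longrightarrow> F w = F w'"
  shows "F \<in> invariant_functions n \<kappa>"
  using assms unfolding invariant_functions_def by blast

lemma invariant_functions_outside: "F \<in> invariant_functions n \<kappa> \<Longrightarrow> w \<notin> signed_perms n \<Longrightarrow> F w = 0"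
  unfolding invariant_functions_def by blast

lemma invariant_functions_eq:
  "F \<in> invariant_functions n \<kappa> \<Longrightarrow> w \<in> signed_perms n \<Longrightarrow> w' \<in> signed_perms n \<Longrightarrow>
    \<kappa> w = \<kappa> w' \<Longrightarrow> F w = F w'"
  unfolding invariant_functions_def by blast

lemma subspace_invariant_functions: "gelem.subspace (invariant_functions n \<kappa>)"
proof (rule gelem.subspaceI)
  show "0 \<in> invariant_functions n \<kappa>" by (rule invariant_functionsI) simp_all
  show "x + y \<in> invariant_functions n \<kappa>"
    if x: "x \<in> invariant_functions n \<kappa>" and y: "y \<in> invariant_functions n \<kappa>" for x y
  proof (rule invariant_functionsI)
    show "(x + y) w = 0" if "w \<notin> signed_perms n" for w
      using that by (simp add: invariant_functions_outside[OF x] invariant_functions_outside[OF y])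
    show "(x + y) w = (x + y) w'"
      if "w \<in> signed_perms n" "w' \<in> signed_perms n" "\<kappa> w = \<kappa> w'" for w w'
      using invariant_functions_eq[OF x that] invariant_functions_eq[OF y that] by simp
  qed
  show "gscale c x \<in> invariant_functions n \<kappa>" if x: "x \<in> invariant_functions n \<kappa>" for c x
  proof (rule invariant_functionsI)
    show "gscale c x w = 0" if "w \<notin> signed_perms n" for w
      using that by (simp add: gscale_def invariant_functions_outside[OF x])
    show "gscale c x w = gscale c x w'"
      if "w \<in> signed_perms n" "w' \<in> signed_perms n" "\<kappa> w = \<kappa> w'" for w w'
      using invariant_functions_eq[OF x that] by (simp add: gscale_def)
  qed
qed

lemma invariant_functions_mono:
  assumes "\<And>w w'. w \<in> signed_perms n \<Longrightarrow> w' \<in> signed_perms n \<Longrightarrow> \<kappa> w = \<kappa> w' \<Longrightarrow> \<mu> w = \<mu> w'"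
  shows "invariant_functions n \<mu> \<subseteq> invariant_functions n \<kappa>"
proof (intro subsetI invariant_functionsI)
  fix F assume F: "F \<in> invariant_functions n \<mu>"
  show "F w = 0" if "w \<notin> signed_perms n" for w
    using invariant_functions_outside[OF F that] .
  show "F w = F w'" if "w \<in> signed_perms n" "w' \<in> signed_perms n" "\<kappa> w = \<kappa> w'" for w w'
    using invariant_functions_eq[OF F that(1,2) assms[OF that]] .
qed

lemma invariant_functions_subset_span:
  assumes "\<And>w. w \<in> signed_perms n \<Longrightarrow> fibre_indicator n \<kappa> (\<kappa> w) \<in> gelem.span S"
  shows "invariant_functions n \<kappa> \<subseteq> gelem.span S"
proof
  fix F assume F: "F \<in> invariant_functions n \<kappa>"
  define rep where "rep k = (SOME w. w \<in> signed_perms n \<and> \<kappa> w = k)" for k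
  have rep: "rep (\<kappa> w) \<in> signed_perms n \<and> \<kappa> (rep (\<kappa> w)) = \<kappa> w" if "w \<in> signed_perms n" for w
    unfolding rep_def by (rule someI[of _ w]) (simp add: that)
  have "F = (\<Sum>k\<in>\<kappa> ` signed_perms n. gscale (F (rep k)) (fibre_indicator n \<kappa> k))"
  proof
    fix w
    show "F w = (\<Sum>k\<in>\<kappa> ` signed_perms n. gscale (F (rep k)) (fibre_indicator n \<kappa> k)) w"
    proof (cases "w \<in> signed_perms n")
      case True
      have "(\<Sum>k\<in>\<kappa> ` signed_perms n. gscale (F (rep k)) (fibre_indicator n \<kappa> k)) w =
          (\<Sum>k\<in>\<kappa> ` signed_perms n. if \<kappa> w = k then F (rep k) else 0)"
        using True by (auto simp: sum_gelem_apply gscale_def fibre_indicator_def intro: sum.cong)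
      also have "\<dots> = F (rep (\<kappa> w))"
        using True by (simp add: finite_signed_perms)
      also have "\<dots> = F w"
        using rep[OF True] True by (auto intro: invariant_functions_eq[OF F])
      finally show ?thesis by simp
    qed (simp add: sum_gelem_apply gscale_def fibre_indicator_def invariant_functions_outside[OF F])
  qed
  also have "\<dots> \<in> gelem.span S"
    using assms by (intro gelem.span_sum gelem.span_scale) auto
  finally show "F \<in> gelem.span S" .
qed

section \<open>Shapes\<close>

lemma pre_0 [simp]: "pre \<alpha> 0 = 0"
  by (simp add: pre_def)

lemma pre_Suc: "i < length \<alpha> \<Longrightarrow> pre \<alpha> (Suc i) = pre \<alpha> i + nat \<bar>\<alpha> ! i\<bar>"
  by (simp add: pre_def take_Suc_conv_app_nth)

lemma pre_ge_length: "length \<alpha> \<le> i \<Longrightarrow> pre \<alpha> i = pre \<alpha> (length \<alpha>)"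
  by (simp add: pre_def)

lemma pre_mono: "i \<le> j \<Longrightarrow> pre \<alpha> i \<le> pre \<alpha> j"
proof (rule lift_Suc_mono_le[of "pre \<alpha>"])
  show "pre \<alpha> k \<le> pre \<alpha> (Suc k)" for k
    using pre_ge_length[of \<alpha> k] pre_ge_length[of \<alpha> "Suc k"]
    by (cases "k < length \<alpha>") (simp_all add: pre_Suc)
qed

lemma pre_append: "i \<le> length \<beta> \<Longrightarrow> pre (\<beta> @ \<gamma>) i = pre \<beta> i"
  by (simp add: pre_def)

lemma pre_snoc_Suc_length: "pre (\<beta> @ [a]) (Suc (length \<beta>)) = pre \<beta> (length \<beta>) + nat \<bar>a\<bar>"
  by (simp add: pre_def)

lemma pre_length: "\<alpha> \<in> signed_comps n \<Longrightarrow> pre \<alpha> (length \<alpha>) = n"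
  by (simp add: pre_def signed_comps_def)

lemma pre_le: "\<alpha> \<in> signed_comps n \<Longrightarrow> pre \<alpha> i \<le> n"
  using pre_mono[of i "length \<alpha>" \<alpha>] pre_ge_length[of \<alpha> i] pre_length[of \<alpha> n]
  by (cases "i \<le> length \<alpha>") auto

lemma pre_less_Suc: "\<alpha> \<in> signed_comps n \<Longrightarrow> i < length \<alpha> \<Longrightarrow> pre \<alpha> i < pre \<alpha> (Suc i)"
  by (auto simp: pre_Suc signed_comps_def)

lemma exists_block:
  assumes "\<alpha> \<in> signed_comps n" "1 \<le> j" "j \<le> n"
  shows "\<exists>i<length \<alpha>. pre \<alpha> i < j \<and> j \<le> pre \<alpha> (Suc i)"
proof -
  have "\<exists>i<length \<alpha>. (\<forall>k\<le>i. \<not> j \<le> pre \<alpha> k) \<and> j \<le> pre \<alpha> (Suc i)"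
    using assms by (intro ex_least_nat_less) (simp_all add: pre_length)
  then show ?thesis by (meson not_le order_refl)
qed

lemma has_shape_sgn:
  "has_shape \<alpha> w \<Longrightarrow> i < length \<alpha> \<Longrightarrow> pre \<alpha> i < j \<Longrightarrow> j \<le> pre \<alpha> (Suc i) \<Longrightarrow>
    sgn (w (int j)) = sgn (\<alpha> ! i)"
  unfolding has_shape_def by blast

lemma has_shape_abs_less:
  "has_shape \<alpha> w \<Longrightarrow> i < length \<alpha> \<Longrightarrow> pre \<alpha> i < j \<Longrightarrow> j < pre \<alpha> (Suc i) \<Longrightarrow>
    \<bar>w (int j)\<bar> < \<bar>w (int j + 1)\<bar>"
  unfolding has_shape_def by blast

lemma has_shape_boundary:
  "has_shape \<alpha> w \<Longrightarrow> Suc i < length \<alpha> \<Longrightarrow> sgn (\<alpha> ! i) = sgn (\<alpha> ! Suc i) \<Longrightarrow>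
    \<not> \<bar>w (int (pre \<alpha> (Suc i)))\<bar> < \<bar>w (int (pre \<alpha> (Suc i)) + 1)\<bar>"
  unfolding has_shape_def by blast

definition same_sign_ascent :: "(int \<Rightarrow> int) \<Rightarrow> nat \<Rightarrow> bool" where
  "same_sign_ascent w j \<longleftrightarrow>
     sgn (w (int j)) = sgn (w (int j + 1)) \<and> \<bar>w (int j)\<bar> < \<bar>w (int j + 1)\<bar>"

text \<open>The supports of the \<open>T n \<alpha>\<close> are exactly the fibres of \<open>shape_key n\<close>
  (\<open>T_eq_fibre_indicator\<close>, \<open>exists_shape\<close>).\<close>
definition shape_key :: "nat \<Rightarrow> (int \<Rightarrow> int) \<Rightarrow> (nat \<Rightarrow> int) \<times> nat set" where
  "shape_key n w = ((\<lambda>j. if 1 \<le> j \<and> j \<le> n then sgn (w (int j)) else 0),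
     {j. 1 \<le> j \<and> j < n \<and> same_sign_ascent w j})"

lemma shape_key_eq_iff:
  "shape_key n w = shape_key n w' \<longleftrightarrow>
    (\<forall>j. 1 \<le> j \<and> j \<le> n \<longrightarrow> sgn (w (int j)) = sgn (w' (int j))) \<and>
    (\<forall>j. 1 \<le> j \<and> j < n \<longrightarrow> same_sign_ascent w j = same_sign_ascent w' j)"
  by (auto simp: shape_key_def fun_eq_iff set_eq_iff)

lemma has_shape_same_sign_ascent_iff:
  assumes \<alpha>: "\<alpha> \<in> signed_comps n" and w: "has_shape \<alpha> w"
    and i: "i < length \<alpha>" "pre \<alpha> i < j" "j \<le> pre \<alpha> (Suc i)" and "j < n"
  shows "same_sign_ascent w j \<longleftrightarrow> j < pre \<alpha> (Suc i)"
proof (cases "j < pre \<alpha> (Suc i)")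
  case True
  then have "sgn (w (int j + 1)) = sgn (\<alpha> ! i)"
    using has_shape_sgn[OF w i(1), of "Suc j"] i by (simp add: add.commute)
  then show ?thesis
    using True has_shape_sgn[OF w i] has_shape_abs_less[OF w i(1,2) True]
    by (simp add: same_sign_ascent_def)
next
  case False
  then have j: "j = pre \<alpha> (Suc i)" using i by simp
  have si: "Suc i < length \<alpha>"
  proof (rule ccontr)
    assume "\<not> Suc i < length \<alpha>"
    then have "pre \<alpha> (Suc i) = n" using pre_ge_length[of \<alpha> "Suc i"] pre_length[OF \<alpha>] by simp
    with j \<open>j < n\<close> show False by simp
  qed
  have "sgn (w (int j + 1)) = sgn (\<alpha> ! Suc i)"
    using has_shape_sgn[OF w si, of "Suc j"] j pre_less_Suc[OF \<alpha> si] by (simp add: add.commute)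
  then show ?thesis
    using False has_shape_sgn[OF w i] has_shape_boundary[OF w si] j
    by (auto simp: same_sign_ascent_def)
qed

lemma shape_key_eq_if_has_shape:
  assumes \<alpha>: "\<alpha> \<in> signed_comps n" and w: "has_shape \<alpha> w" and w': "has_shape \<alpha> w'"
  shows "shape_key n w = shape_key n w'"
  unfolding shape_key_eq_iff
proof (intro conjI allI impI)
  fix j assume "1 \<le> j \<and> j \<le> n"
  then obtain i where i: "i < length \<alpha>" "pre \<alpha> i < j" "j \<le> pre \<alpha> (Suc i)"
    using exists_block[OF \<alpha>] by blast
  show "sgn (w (int j)) = sgn (w' (int j))"
    using has_shape_sgn[OF w i] has_shape_sgn[OF w' i] by simp
next
  fix j assume j: "1 \<le> j \<and> j < n"
  then obtain i where i: "i < length \<alpha>" "pre \<alpha> i < j" "j \<le> pre \<alpha> (Suc i)"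
    using exists_block[OF \<alpha>] by force
  show "same_sign_ascent w j = same_sign_ascent w' j"
    using has_shape_same_sign_ascent_iff[OF \<alpha> w i] has_shape_same_sign_ascent_iff[OF \<alpha> w' i] j
    by simp
qed

lemma has_shape_if_shape_key_eq:
  assumes \<alpha>: "\<alpha> \<in> signed_comps n" and w: "has_shape \<alpha> w"
    and key: "shape_key n w' = shape_key n w"
  shows "has_shape \<alpha> w'"
proof -
  have sgn': "sgn (w' (int j)) = sgn (\<alpha> ! i)"
    if i: "i < length \<alpha>" "pre \<alpha> i < j" "j \<le> pre \<alpha> (Suc i)" for i j
    using has_shape_sgn[OF w i] key i pre_le[OF \<alpha>, of "Suc i"] unfolding shape_key_eq_iff by simp
  have ascent': "same_sign_ascent w' j \<longleftrightarrow> j < pre \<alpha> (Suc i)"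
    if i: "i < length \<alpha>" "pre \<alpha> i < j" "j \<le> pre \<alpha> (Suc i)" and "j < n" for i j
    using has_shape_same_sign_ascent_iff[OF \<alpha> w i \<open>j < n\<close>] key i \<open>j < n\<close>
    unfolding shape_key_eq_iff by simp
  show ?thesis
    unfolding has_shape_def
  proof (intro conjI allI impI)
    fix i j assume "i < length \<alpha>" "pre \<alpha> i < j \<and> j \<le> pre \<alpha> (Suc i)"
    then show "sgn (w' (int j)) = sgn (\<alpha> ! i)" using sgn' by blast
  next
    fix i j assume "i < length \<alpha>" "pre \<alpha> i < j \<and> j < pre \<alpha> (Suc i)"
    then have "same_sign_ascent w' j" using ascent'[of i j] pre_le[OF \<alpha>, of "Suc i"] by simp
    then show "\<bar>w' (int j)\<bar> < \<bar>w' (int j + 1)\<bar>" by (simp add: same_sign_ascent_def)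
  next
    fix i assume si: "Suc i < length \<alpha>"
    let ?P = "pre \<alpha> (Suc i)"
    have i: "i < length \<alpha>" "pre \<alpha> i < ?P" "?P \<le> pre \<alpha> (Suc i)"
      using si pre_less_Suc[OF \<alpha>, of i] by auto
    have next_block: "?P < pre \<alpha> (Suc (Suc i))" using pre_less_Suc[OF \<alpha> si] .
    then have "?P < n" using pre_le[OF \<alpha>, of "Suc (Suc i)"] by simp
    then have "\<not> same_sign_ascent w' ?P" using ascent'[OF i] by simp
    moreover have "sgn (w' (int ?P + 1)) = sgn (\<alpha> ! Suc i)"
      using sgn'[OF si, of "Suc ?P"] next_block by (simp add: add.commute)
    ultimately show "\<not> (sgn (\<alpha> ! i) = sgn (\<alpha> ! Suc i) \<and>
        \<bar>w' (int ?P)\<bar> < \<bar>w' (int ?P + 1)\<bar>)"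
      using sgn'[OF i] by (auto simp: same_sign_ascent_def)
  qed
qed

lemma has_shape_cong:
  "\<alpha> \<in> signed_comps n \<Longrightarrow> shape_key n w = shape_key n w' \<Longrightarrow> has_shape \<alpha> w \<longleftrightarrow> has_shape \<alpha> w'"
  by (metis has_shape_if_shape_key_eq)

lemma has_shape_snoc_iff:
  fixes \<beta> :: "int list" and a :: int and w :: "int \<Rightarrow> int"
  defines "P \<equiv> pre \<beta> (length \<beta>)"
  shows "has_shape (\<beta> @ [a]) w \<longleftrightarrow> has_shape \<beta> w \<and>
     (\<forall>j. P < j \<and> j \<le> P + nat \<bar>a\<bar> \<longrightarrow> sgn (w (int j)) = sgn a) \<and>
     (\<forall>j. P < j \<and> j < P + nat \<bar>a\<bar> \<longrightarrow> \<bar>w (int j)\<bar> < \<bar>w (int j + 1)\<bar>) \<and>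
     (\<beta> \<noteq> [] \<longrightarrow> \<not> (sgn (last \<beta>) = sgn a \<and> \<bar>w (int P)\<bar> < \<bar>w (int P + 1)\<bar>))"
proof -
  have pre_last: "pre (\<beta> @ [a]) (length \<beta>) = P" by (simp add: P_def pre_append)
  have boundaries: "(\<forall>i. Suc i < length (\<beta> @ [a]) \<longrightarrow>
        Q ((\<beta> @ [a]) ! i) ((\<beta> @ [a]) ! Suc i) (pre (\<beta> @ [a]) (Suc i)))
      \<longleftrightarrow> (\<forall>i. Suc i < length \<beta> \<longrightarrow> Q (\<beta> ! i) (\<beta> ! Suc i) (pre \<beta> (Suc i))) \<and>
        (\<beta> \<noteq> [] \<longrightarrow> Q (last \<beta>) a P)" for Q
  proof (cases \<beta> rule: rev_cases)
    case (snoc \<gamma> b)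
    then show ?thesis
      using pre_last by (auto simp: All_less_Suc nth_append pre_append less_Suc_eq)
  qed simp
  show ?thesis
    unfolding has_shape_def
      boundaries[of "\<lambda>x y p. \<not> (sgn x = sgn y \<and> \<bar>w (int p)\<bar> < \<bar>w (int p + 1)\<bar>)"]
    by (auto simp: P_def All_less_Suc nth_append pre_append pre_snoc_Suc_length)
qed

lemma has_shape_extend_last_part:
  assumes shape: "has_shape (\<beta> @ [b]) w" and "b \<noteq> 0"
    and m: "pre (\<beta> @ [b]) (length (\<beta> @ [b])) = m"
    and "sgn b = sgn (w (int m))" and ascent: "same_sign_ascent w m"
  shows "has_shape (\<beta> @ [b + sgn b]) w"
proof -
  let ?P = "pre \<beta> (length \<beta>)"
  have b: "sgn (b + sgn b) = sgn b" "nat \<bar>b + sgn b\<bar> = Suc (nat \<bar>b\<bar>)"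
    using \<open>b \<noteq> 0\<close> by (auto simp: sgn_if)
  have "?P + nat \<bar>b\<bar> = m" using m pre_snoc_Suc_length[of \<beta> b] by simp
  moreover have "sgn (w (int m + 1)) = sgn b" "\<bar>w (int m)\<bar> < \<bar>w (int m + 1)\<bar>"
    using ascent \<open>sgn b = sgn (w (int m))\<close> by (simp_all add: same_sign_ascent_def)
  ultimately show ?thesis
    using shape b unfolding has_shape_snoc_iff by (auto simp: le_Suc_eq less_Suc_eq add.commute)
qed

lemma has_shape_snoc_new_part:
  assumes shape: "has_shape \<alpha> w" and m: "pre \<alpha> (length \<alpha>) = m" and "w (int (Suc m)) \<noteq> 0"
    and last: "\<alpha> \<noteq> [] \<Longrightarrow> sgn (last \<alpha>) = sgn (w (int m)) \<and> \<not> same_sign_ascent w m"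
  shows "has_shape (\<alpha> @ [sgn (w (int (Suc m)))]) w"
proof -
  let ?s = "sgn (w (int (Suc m)))"
  have abs_s: "nat \<bar>?s\<bar> = 1" using \<open>w (int (Suc m)) \<noteq> 0\<close> by (simp add: sgn_if)
  show ?thesis
    unfolding has_shape_snoc_iff
  proof (intro conjI allI impI)
    show "has_shape \<alpha> w" by (rule shape)
    fix j assume "pre \<alpha> (length \<alpha>) < j \<and> j \<le> pre \<alpha> (length \<alpha>) + nat \<bar>?s\<bar>"
    then have "j = Suc m" using m abs_s by linarith
    then show "sgn (w (int j)) = sgn ?s" by simp
  next
    fix j assume "pre \<alpha> (length \<alpha>) < j \<and> j < pre \<alpha> (length \<alpha>) + nat \<bar>?s\<bar>"
    then show "\<bar>w (int j)\<bar> < \<bar>w (int j + 1)\<bar>" using abs_s by linarith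
  next
    assume "\<alpha> \<noteq> []"
    then show "\<not> (sgn (last \<alpha>) = sgn ?s \<and>
        \<bar>w (int (pre \<alpha> (length \<alpha>)))\<bar> < \<bar>w (int (pre \<alpha> (length \<alpha>)) + 1)\<bar>)"
      using last m by (auto simp: same_sign_ascent_def add.commute)
  qed
qed

lemma exists_shape_prefix:
  assumes "\<And>j. 1 \<le> j \<Longrightarrow> j \<le> m \<Longrightarrow> w (int j) \<noteq> 0"
  shows "\<exists>\<alpha>. (\<forall>a\<in>set \<alpha>. a \<noteq> 0) \<and> pre \<alpha> (length \<alpha>) = m \<and> has_shape \<alpha> w \<and>
    (1 \<le> m \<longrightarrow> \<alpha> \<noteq> [] \<and> sgn (last \<alpha>) = sgn (w (int m)))"
  using assms
proof (induction m)
  case 0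
  show ?case by (intro exI[of _ "[]"]) (simp add: has_shape_def)
next
  case (Suc m)
  then obtain \<alpha> where \<alpha>: "\<forall>a\<in>set \<alpha>. a \<noteq> 0" "pre \<alpha> (length \<alpha>) = m" "has_shape \<alpha> w"
    "1 \<le> m \<longrightarrow> \<alpha> \<noteq> [] \<and> sgn (last \<alpha>) = sgn (w (int m))"
    by force
  have w: "w (int (Suc m)) \<noteq> 0" using Suc.prems[of "Suc m"] by simp
  show ?case
  proof (cases "1 \<le> m \<and> same_sign_ascent w m")
    case True
    then obtain \<beta> b where \<beta>: "\<alpha> = \<beta> @ [b]" using \<alpha>(4) by (metis append_butlast_last_id)
    have b: "b \<noteq> 0" "sgn b = sgn (w (int m))" using \<alpha>(1,4) True \<beta> by auto
    have "sgn (b + sgn b) = sgn b" "nat \<bar>b + sgn b\<bar> = Suc (nat \<bar>b\<bar>)"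
      using b(1) by (auto simp: sgn_if)
    moreover have "has_shape (\<beta> @ [b + sgn b]) w"
      using has_shape_extend_last_part[of \<beta> b w m] \<alpha>(2,3) \<beta> b True by simp
    ultimately show ?thesis
      using \<alpha>(1,2) \<beta> b True pre_snoc_Suc_length[of \<beta>]
      by (intro exI[of _ "\<beta> @ [b + sgn b]"]) (auto simp: same_sign_ascent_def add.commute)
  next
    case False
    have "1 \<le> m" if "\<alpha> \<noteq> []"
      using that \<alpha>(1,2) by (cases \<alpha> rule: rev_cases) (auto simp: pre_snoc_Suc_length)
    then have "has_shape (\<alpha> @ [sgn (w (int (Suc m)))]) w"
      using has_shape_snoc_new_part[OF \<alpha>(3,2) w] \<alpha>(4) False by blast
    then show ?thesis
      using \<alpha>(1,2) w pre_snoc_Suc_length[of \<alpha>]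
      by (intro exI[of _ "\<alpha> @ [sgn (w (int (Suc m)))]"]) (auto simp: sgn_if)
  qed
qed

lemma exists_shape:
  assumes "w \<in> signed_perms n"
  shows "\<exists>\<alpha>\<in>signed_comps n. has_shape \<alpha> w"
proof -
  have "w (int j) \<noteq> 0" if "1 \<le> j" "j \<le> n" for j
    using signed_perm_abs_bounds[OF assms, of "int j"] that by auto
  then obtain \<alpha> where "\<forall>a\<in>set \<alpha>. a \<noteq> 0" "pre \<alpha> (length \<alpha>) = n" "has_shape \<alpha> w"
    using exists_shape_prefix[of n w] by blast
  then show ?thesis unfolding signed_comps_def pre_def by auto
qed

lemma T_eq_fibre_indicator:
  assumes "\<alpha> \<in> signed_comps n" "has_shape \<alpha> w"
  shows "T n \<alpha> = fibre_indicator n (shape_key n) (shape_key n w)"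
proof -
  have "has_shape \<alpha> x \<longleftrightarrow> shape_key n x = shape_key n w" for x
    using has_shape_if_shape_key_eq[OF assms, of x] shape_key_eq_if_has_shape[OF assms, of x]
    by auto
  then show ?thesis by (simp add: T_def fibre_indicator_def fun_eq_iff)
qed

lemma T_invariant: "\<alpha> \<in> signed_comps n \<Longrightarrow> T n \<alpha> \<in> invariant_functions n (shape_key n)"
  by (rule invariant_functionsI) (auto simp: T_def dest: has_shape_cong)

lemma Omega_eq_invariant_functions: "Omega n = invariant_functions n (shape_key n)"
proof
  show "Omega n \<subseteq> invariant_functions n (shape_key n)"
    unfolding Omega_def qspan_eq_span
    by (rule gelem.span_minimal) (auto intro: T_invariant subspace_invariant_functions)
  show "invariant_functions n (shape_key n) \<subseteq> Omega n"
    unfolding Omega_def qspan_eq_span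
  proof (rule invariant_functions_subset_span)
    fix w assume "w \<in> signed_perms n"
    then obtain \<alpha> where "\<alpha> \<in> signed_comps n" "has_shape \<alpha> w" using exists_shape by blast
    then show "fibre_indicator n (shape_key n) (shape_key n w) \<in>
        gelem.span {T n \<alpha> |\<alpha>. \<alpha> \<in> signed_comps n}"
      by (metis (mono_tags, lifting) T_eq_fibre_indicator gelem.span_base mem_Collect_eq)
  qed
qed

section \<open>Descent classes\<close>

definition word_Des :: "nat \<Rightarrow> (int \<Rightarrow> int) \<Rightarrow> nat set" where
  "word_Des n w = {j. 1 \<le> j \<and> j < n \<and> w (int j + 1) < w (int j)}"

lemma word_Des_subset: "word_Des n w \<subseteq> {1..<n}"
  by (auto simp: word_Des_def)

lemma Des_subset_iff_word_Des_subset: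
  assumes "0 \<in> J"
  shows "Des n w \<subseteq> J \<longleftrightarrow> word_Des n w \<subseteq> J"
proof -
  have "Des n w \<subseteq> insert 0 (word_Des n w)" "word_Des n w \<subseteq> Des n w"
    by (auto simp: Des_def word_Des_def)
  then show ?thesis using assms by blast
qed

lemma XJ_eq_sum_fibre_indicators:
  assumes "finite K"
  shows "XJ n (insert 0 K) = (\<Sum>K'\<in>Pow K. fibre_indicator n (word_Des n) K')"
proof
  fix w
  have "(\<Sum>K'\<in>Pow K. fibre_indicator n (word_Des n) K') w =
      (\<Sum>K'\<in>Pow K. if word_Des n w = K' then (if w \<in> signed_perms n then 1 else 0) else 0)"
    by (auto simp: sum_gelem_apply fibre_indicator_def intro: sum.cong)
  also have "\<dots> = (if w \<in> signed_perms n \<and> word_Des n w \<subseteq> K then 1 else 0)"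
    using assms by simp
  also have "\<dots> = XJ n (insert 0 K) w"
    using word_Des_subset[of n w] Des_subset_iff_word_Des_subset[of "insert 0 K" n w]
    by (auto simp: XJ_def)
  finally show "XJ n (insert 0 K) w = (\<Sum>K'\<in>Pow K. fibre_indicator n (word_Des n) K') w" ..
qed

lemma fibre_indicator_word_Des_in_I0:
  assumes n: "1 \<le> n" and K: "K \<subseteq> {1..<n}"
  shows "fibre_indicator n (word_Des n) K \<in> I0 n"
proof -
  have "finite K" using K finite_subset by blast
  then show ?thesis
    using K
  proof (induction K rule: finite_psubset_induct)
    case (psubset K)
    have "XJ n (insert 0 K) =
        fibre_indicator n (word_Des n) K + (\<Sum>K'\<in>Pow K - {K}. fibre_indicator n (word_Des n) K')"
      using XJ_eq_sum_fibre_indicators[OF psubset.hyps(1)] sum.remove[of "Pow K" K] psubset.hyps(1)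
      by simp
    then have "fibre_indicator n (word_Des n) K =
        XJ n (insert 0 K) - (\<Sum>K'\<in>Pow K - {K}. fibre_indicator n (word_Des n) K')"
      by (simp add: eq_diff_eq)
    moreover have "XJ n (insert 0 K) \<in> I0 n"
      unfolding I0_def qspan_eq_span
      by (intro gelem.span_base CollectI exI[of _ "insert 0 K"]) (use psubset.prems n in auto)
    moreover have "fibre_indicator n (word_Des n) K' \<in> I0 n" if "K' \<in> Pow K - {K}" for K'
      using psubset.IH[of K'] psubset.prems that by auto
    ultimately show ?case
      unfolding I0_def qspan_eq_span by (metis (no_types, lifting) gelem.span_diff gelem.span_sum)
  qed
qed

lemma I0_eq_invariant_functions:
  assumes "1 \<le> n"
  shows "I0 n = invariant_functions n (word_Des n)"
proof
  show "I0 n \<subseteq> invariant_functions n (word_Des n)"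
    unfolding I0_def qspan_eq_span
    by (rule gelem.span_minimal[OF _ subspace_invariant_functions])
      (auto intro!: invariant_functionsI simp: XJ_def Des_subset_iff_word_Des_subset)
  show "invariant_functions n (word_Des n) \<subseteq> I0 n"
    using invariant_functions_subset_span[of n "word_Des n"]
      fibre_indicator_word_Des_in_I0[OF assms word_Des_subset]
    unfolding I0_def qspan_eq_span by blast
qed

lemma word_Des_mem_iff:
  assumes w: "w \<in> signed_perms n" and j: "1 \<le> j" "j < n"
  shows "j \<in> word_Des n w \<longleftrightarrow>
    (if sgn (w (int j)) = sgn (w (int j + 1))
     then sgn (w (int j)) = 1 \<longleftrightarrow> \<not> same_sign_ascent w j
     else sgn (w (int j)) = 1)"
proof -
  have "w (int j) \<noteq> 0" "w (int j + 1) \<noteq> 0"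
    using signed_perm_abs_bounds[OF w, of "int j"] signed_perm_abs_bounds[OF w, of "int j + 1"] j
    by auto
  moreover have "\<bar>w (int j)\<bar> \<noteq> \<bar>w (int j + 1)\<bar>" using signed_perm_abs_eq_iff[OF w] by simp
  ultimately show ?thesis
    using j by (auto simp: word_Des_def same_sign_ascent_def sgn_if abs_if)
qed

lemma word_Des_eq_if_shape_key_eq:
  assumes w: "w \<in> signed_perms n" and w': "w' \<in> signed_perms n"
    and key: "shape_key n w = shape_key n w'"
  shows "word_Des n w = word_Des n w'"
proof (intro set_eqI)
  fix j
  show "j \<in> word_Des n w \<longleftrightarrow> j \<in> word_Des n w'"
  proof (cases "1 \<le> j \<and> j < n")
    case True
    have sgn_eq: "sgn (w (int i)) = sgn (w' (int i))" if "1 \<le> i" "i \<le> n" for i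
      using key that unfolding shape_key_eq_iff by blast
    have "sgn (w (int j + 1)) = sgn (w' (int j + 1))"
      using sgn_eq[of "Suc j"] True by (simp add: add.commute)
    moreover have "same_sign_ascent w j = same_sign_ascent w' j"
      using key True unfolding shape_key_eq_iff by blast
    ultimately show ?thesis
      using True sgn_eq[of j] word_Des_mem_iff[OF w] word_Des_mem_iff[OF w'] by simp
  next
    case False
    then show ?thesis by (auto simp: word_Des_def)
  qed
qed

lemma I0_subset_Omega: "1 \<le> n \<Longrightarrow> I0 n \<subseteq> Omega n"
  unfolding I0_eq_invariant_functions Omega_eq_invariant_functions
  by (rule invariant_functions_mono) (rule word_Des_eq_if_shape_key_eq)

section \<open>Products with X_J\<close>

lemma strict_mono_chain:
  fixes g :: "nat \<Rightarrow> 'a::order"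
  assumes step: "\<And>k. a < k \<Longrightarrow> k < b \<Longrightarrow> g k < g (Suc k)"
  shows "a < i \<Longrightarrow> i < j \<Longrightarrow> j \<le> b \<Longrightarrow> g i < g j"
proof (induction j)
  case (Suc j)
  then show ?case
    using step[of j] by (cases "i = j") (auto intro: less_trans)
qed simp

lemma comp_inv_apply_abs:
  assumes z: "z \<in> signed_perms n" and v: "v \<in> signed_perms n"
  shows "(z \<circ> inv v) \<bar>v x\<bar> = sgn (v x) * z x"
proof -
  have u: "z \<circ> inv v \<in> signed_perms n" using signed_perms_comp[OF z signed_perms_inv[OF v]] .
  have "(z \<circ> inv v) (v x) = z x" using signed_perm_inv_apply(1)[OF v] by simp
  then show ?thesis
    using signed_perm_odd[OF u, of "v x"] signed_perm_zero[OF z] signed_perm_zero[OF v]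
      signed_perm_eq_iff[OF v, of x 0]
    by (cases "v x" rule: linorder_cases) auto
qed

lemma gmult_outside: "z \<notin> signed_perms n \<Longrightarrow> gmult n x y z = 0"
  unfolding gmult_def using signed_perms_comp by (intro sum.neutral ballI) auto

lemma gmult_scale_add: "gmult n (gscale c x + x') y = gscale c (gmult n x y) + gmult n x' y"
proof
  fix w
  show "gmult n (gscale c x + x') y w = (gscale c (gmult n x y) + gmult n x' y) w"
    unfolding gmult_def gscale_def plus_fun_apply sum_distrib_left sum.distrib[symmetric]
    by (intro sum.cong refl) (simp add: algebra_simps)
qed

lemma gmult_zero: "gmult n 0 y = 0"
  by (rule ext) (simp add: gmult_def cong: if_cong)

lemma gmult_XJ_apply:
  assumes z: "z \<in> signed_perms n"
  shows "gmult n (XJ n J) y z = (\<Sum>v\<in>{v \<in> signed_perms n. Des n (z \<circ> inv v) \<subseteq> J}. y v)"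
proof -
  have "gmult n (XJ n J) y z =
      (\<Sum>v\<in>signed_perms n. \<Sum>u\<in>signed_perms n. if u = z \<circ> inv v then XJ n J u * y v else 0)"
    unfolding gmult_def by (subst sum.swap) (auto intro!: sum.cong simp: comp_eq_iff_eq_comp_inv)
  also have "\<dots> = (\<Sum>v\<in>signed_perms n. if Des n (z \<circ> inv v) \<subseteq> J then y v else 0)"
    using signed_perms_comp[OF z signed_perms_inv]
    by (intro sum.cong refl) (simp add: finite_signed_perms XJ_def)
  also have "\<dots> = (\<Sum>v\<in>{v \<in> signed_perms n. Des n (z \<circ> inv v) \<subseteq> J}. y v)"
    by (simp add: sum.inter_filter finite_signed_perms)
  finally show ?thesis .
qed

text \<open>For \<open>0 \<in> J\<close>, the elements of \<open>J\<close> cut the positions \<open>1, ..., n\<close> into blocks: the block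
  starting at \<open>s \<in> J\<close> is \<open>{s<..block_end s}\<close>, and \<open>block_start q\<close> is the start of the block of \<open>q\<close>.
  A signed permutation \<open>u\<close> satisfies \<open>Des n u \<subseteq> J\<close> iff \<open>u\<close> increases along every block.\<close>
locale block_set =
  fixes n :: nat and J :: "nat set"
  assumes zero_mem: "0 \<in> J" and subset: "J \<subseteq> {0..<n}"
begin

definition block_end :: "nat \<Rightarrow> nat" where
  "block_end s = Min ({j \<in> J. s < j} \<union> {n})"

definition block_start :: "nat \<Rightarrow> nat" where
  "block_start q = Max {j \<in> J. j < q}"

lemma finite_J: "finite J"
  using subset finite_subset by blast

lemma block_end_le: "block_end s \<le> n"
  unfolding block_end_def using finite_J by (intro Min_le) auto

lemma block_end_gt: "s \<in> J \<Longrightarrow> s < block_end s"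
  unfolding block_end_def using finite_J subset by (subst Min_gr_iff) auto

lemma block_end_le_mem: "j \<in> J \<Longrightarrow> s < j \<Longrightarrow> block_end s \<le> j"
  unfolding block_end_def using finite_J by (intro Min_le) auto

lemma not_mem_inside_block: "s < q \<Longrightarrow> q < block_end s \<Longrightarrow> q \<notin> J"
  using block_end_le_mem by fastforce

lemma block_start_mem_less: "1 \<le> q \<Longrightarrow> block_start q \<in> J \<and> block_start q < q"
proof -
  assume "1 \<le> q"
  then have "{j \<in> J. j < q} \<noteq> {}" using zero_mem by auto
  then have "block_start q \<in> {j \<in> J. j < q}"
    unfolding block_start_def using finite_J by (intro Max_in) auto
  then show ?thesis by simp
qed

lemma block_start_eqI:
  assumes s: "s \<in> J" "s < q" "q \<le> block_end s"
  shows "block_start q = s"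
  unfolding block_start_def
proof (rule Max_eqI)
  show "j \<le> s" if "j \<in> {j \<in> J. j < q}" for j
    using that s block_end_le_mem[of j s] by force
qed (use finite_J s in auto)

lemma le_block_end_block_start:
  assumes q: "1 \<le> q" "q \<le> n"
  shows "q \<le> block_end (block_start q)"
proof (rule ccontr)
  let ?s = "block_start q"
  assume less: "\<not> q \<le> block_end ?s"
  have "block_end ?s \<in> {j \<in> J. ?s < j} \<union> {n}"
    unfolding block_end_def using finite_J by (intro Min_in) auto
  then have "block_end ?s \<in> {j \<in> J. j < q}" using less q by auto
  then have "block_end ?s \<le> ?s"
    unfolding block_start_def using finite_J by (intro Max_ge) auto
  with \<open>block_end ?s \<in> {j \<in> J. ?s < j} \<union> {n}\<close> less q show False by auto
qed

lemma block_start_eq_iff: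
  assumes "s \<in> J" "1 \<le> q" "q \<le> n"
  shows "block_start q = s \<longleftrightarrow> s < q \<and> q \<le> block_end s"
  using assms block_start_mem_less[of q] le_block_end_block_start[of q] block_start_eqI[of s q]
  by auto

lemma card_block: "s \<in> J \<Longrightarrow> card {q \<in> {1..n}. block_start q = s} = block_end s - s"
proof -
  assume s: "s \<in> J"
  have "{q \<in> {1..n}. block_start q = s} = {s<..block_end s}"
  proof (intro set_eqI iffI)
    fix q assume "q \<in> {q \<in> {1..n}. block_start q = s}"
    then show "q \<in> {s<..block_end s}" using block_start_eq_iff[OF s, of q] by auto
  next
    fix q assume "q \<in> {s<..block_end s}"
    then show "q \<in> {q \<in> {1..n}. block_start q = s}"
      using block_start_eq_iff[OF s, of q] block_end_le[of s] by auto
  qed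
  then show ?thesis by simp
qed

lemma block_start_Suc: "1 \<le> q \<Longrightarrow> q \<notin> J \<Longrightarrow> block_start (Suc q) = block_start q"
  unfolding block_start_def by (metis less_Suc_eq)

text \<open>A labelling of \<open>v\<close> records, for each position \<open>i\<close>, the sign \<open>e i\<close> of \<open>v i\<close> and the
  block \<open>f i\<close> containing \<open>\<bar>v i\<bar>\<close>; every block receives as many positions as it is long.\<close>
definition labellings :: "((nat \<Rightarrow> int) \<times> (nat \<Rightarrow> nat)) set" where
  "labellings = {(e, f). (\<forall>i. 1 \<le> i \<and> i \<le> n \<longrightarrow> (e i = 1 \<or> e i = -1) \<and> f i \<in> J) \<and>
      (\<forall>i. \<not> (1 \<le> i \<and> i \<le> n) \<longrightarrow> e i = 0 \<and> f i = 0) \<and>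
      (\<forall>s\<in>J. card {i \<in> {1..n}. f i = s} = block_end s - s)}"

text \<open>Ranking position \<open>i\<close> inside its block by \<open>e i * z i\<close> makes \<open>z \<circ> inv v\<close> increase
  along every block, with value \<open>e i * z i\<close> at \<open>\<bar>v i\<bar>\<close>.\<close>
definition position :: "(int \<Rightarrow> int) \<Rightarrow> (nat \<Rightarrow> int) \<Rightarrow> (nat \<Rightarrow> nat) \<Rightarrow> nat \<Rightarrow> nat" where
  "position z e f i =
     f i + 1 + card {i' \<in> {1..n}. f i' = f i \<and> e i' * z (int i') < e i * z (int i)}"

definition perm_of_labelling :: "(int \<Rightarrow> int) \<Rightarrow> (nat \<Rightarrow> int) \<times> (nat \<Rightarrow> nat) \<Rightarrow> int \<Rightarrow> int" where
  "perm_of_labelling z \<phi> = odd_extension n (\<lambda>i. fst \<phi> i * int (position z (fst \<phi>) (snd \<phi>) i))"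

definition labelling_of :: "(int \<Rightarrow> int) \<Rightarrow> (nat \<Rightarrow> int) \<times> (nat \<Rightarrow> nat)" where
  "labelling_of v = ((\<lambda>i. if 1 \<le> i \<and> i \<le> n then sgn (v (int i)) else 0),
                     (\<lambda>i. if 1 \<le> i \<and> i \<le> n then block_start (nat \<bar>v (int i)\<bar>) else 0))"

definition compatible_perms :: "(int \<Rightarrow> int) \<Rightarrow> (int \<Rightarrow> int) set" where
  "compatible_perms z = {v \<in> signed_perms n. Des n (z \<circ> inv v) \<subseteq> J}"

context
  fixes z :: "int \<Rightarrow> int" and e :: "nat \<Rightarrow> int" and f :: "nat \<Rightarrow> nat"
  assumes z: "z \<in> signed_perms n" and ef: "(e, f) \<in> labellings"
begin

lemma labelling_sign: "1 \<le> i \<Longrightarrow> i \<le> n \<Longrightarrow> e i = 1 \<or> e i = -1"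
  using ef unfolding labellings_def by auto

lemma labelling_block: "1 \<le> i \<Longrightarrow> i \<le> n \<Longrightarrow> f i \<in> J"
  using ef unfolding labellings_def by auto

lemma labelling_card: "s \<in> J \<Longrightarrow> card {i \<in> {1..n}. f i = s} = block_end s - s"
  using ef unfolding labellings_def by auto

lemma signed_value_inj:
  assumes i: "1 \<le> i" "i \<le> n" and i': "1 \<le> i'" "i' \<le> n"
    and eq: "e i * z (int i) = e i' * z (int i')"
  shows "i = i'"
proof -
  have "\<bar>z (int i)\<bar> = \<bar>z (int i')\<bar>"
    using arg_cong[OF eq, of abs] labelling_sign[OF i] labelling_sign[OF i']
    by (auto simp: abs_mult)
  then show ?thesis unfolding signed_perm_abs_eq_iff[OF z] by simp
qed

lemma position_bounds:
  assumes i: "1 \<le> i" "i \<le> n"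
  shows "f i < position z e f i" "position z e f i \<le> block_end (f i)"
proof -
  show "f i < position z e f i" unfolding position_def by simp
  have "card {i' \<in> {1..n}. f i' = f i \<and> e i' * z (int i') < e i * z (int i)} <
      card {i' \<in> {1..n}. f i' = f i}"
    by (rule psubset_card_mono) (use i in auto)
  then show "position z e f i \<le> block_end (f i)"
    using labelling_card[OF labelling_block[OF i]] block_end_gt[OF labelling_block[OF i]]
    unfolding position_def by simp
qed

lemma position_less_if:
  assumes i: "1 \<le> i" "i \<le> n" and i': "1 \<le> i'" "i' \<le> n"
    and less: "f i < f i' \<or> (f i = f i' \<and> e i * z (int i) < e i' * z (int i'))"
  shows "position z e f i < position z e f i'"
  using less
proof
  assume "f i < f i'"
  then have "block_end (f i) \<le> f i'" using block_end_le_mem[OF labelling_block[OF i']] by simp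
  then show ?thesis using position_bounds[OF i] position_bounds[OF i'] by simp
next
  assume same: "f i = f i' \<and> e i * z (int i) < e i' * z (int i')"
  have "card {j \<in> {1..n}. f j = f i \<and> e j * z (int j) < e i * z (int i)} <
      card {j \<in> {1..n}. f j = f i' \<and> e j * z (int j) < e i' * z (int i')}"
    by (rule psubset_card_mono) (use i same in auto)
  then show ?thesis using same unfolding position_def by simp
qed

lemma position_less_iff:
  assumes i: "1 \<le> i" "i \<le> n" and i': "1 \<le> i'" "i' \<le> n"
  shows "position z e f i < position z e f i' \<longleftrightarrow>
    f i < f i' \<or> (f i = f i' \<and> e i * z (int i) < e i' * z (int i'))"
proof
  assume "position z e f i < position z e f i'"
  then show "f i < f i' \<or> (f i = f i' \<and> e i * z (int i) < e i' * z (int i'))"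
    using position_less_if[OF i' i] signed_value_inj[OF i i'] by (metis less_asym linorder_neqE)
qed (rule position_less_if[OF i i'])

lemma position_bij: "bij_betw (position z e f) {1..n} {1..n}"
proof -
  have inj: "inj_on (position z e f) {1..n}"
  proof (rule inj_onI)
    fix i i' assume "i \<in> {1..n}" "i' \<in> {1..n}" and eq: "position z e f i = position z e f i'"
    then show "i = i'"
      using position_less_iff[of i i'] position_less_iff[of i' i] signed_value_inj[of i i']
      by (metis atLeastAtMost_iff less_irrefl linorder_neqE)
  qed
  have "position z e f i \<in> {1..n}" if "i \<in> {1..n}" for i
    using position_bounds[of i] block_end_le[of "f i"] that by auto
  then have "position z e f ` {1..n} = {1..n}" by (intro endo_inj_surj inj) auto
  with inj show ?thesis by (simp add: bij_betw_def)
qed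

lemma perm_of_labelling_apply:
  "1 \<le> i \<Longrightarrow> i \<le> n \<Longrightarrow> perm_of_labelling z (e, f) (int i) = e i * int (position z e f i)"
  by (simp add: perm_of_labelling_def odd_extension_apply)

lemma perm_of_labelling_signed_perm: "perm_of_labelling z (e, f) \<in> signed_perms n"
proof -
  have "nat \<bar>e i * int (position z e f i)\<bar> = position z e f i" if "i \<in> {1..n}" for i
    using labelling_sign[of i] that by (auto simp: abs_mult)
  then have "bij_betw (\<lambda>i. nat \<bar>e i * int (position z e f i)\<bar>) {1..n} {1..n} \<longleftrightarrow>
      bij_betw (position z e f) {1..n} {1..n}"
    by (rule bij_betw_cong)
  then have "bij_betw (\<lambda>i. nat \<bar>e i * int (position z e f i)\<bar>) {1..n} {1..n}"
    using position_bij by simp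
  then show ?thesis by (simp add: perm_of_labelling_def odd_extension_signed_perm)
qed

lemma abs_perm_of_labelling:
  "1 \<le> i \<Longrightarrow> i \<le> n \<Longrightarrow> \<bar>perm_of_labelling z (e, f) (int i)\<bar> = int (position z e f i)"
  using labelling_sign[of i] by (auto simp: perm_of_labelling_apply abs_mult)

lemma sgn_perm_of_labelling:
  "1 \<le> i \<Longrightarrow> i \<le> n \<Longrightarrow> sgn (perm_of_labelling z (e, f) (int i)) = e i"
  using labelling_sign[of i] position_bounds(1)[of i]
  by (auto simp: perm_of_labelling_apply sgn_mult)

lemma block_start_position: "1 \<le> i \<Longrightarrow> i \<le> n \<Longrightarrow> block_start (position z e f i) = f i"
  using block_start_eqI[OF labelling_block] position_bounds by blast

lemma same_sign_ascent_perm_of_labelling_iff: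
  assumes j: "1 \<le> j" "j < n"
  shows "same_sign_ascent (perm_of_labelling z (e, f)) j \<longleftrightarrow>
    e j = e (Suc j) \<and> (f j < f (Suc j) \<or> (f j = f (Suc j) \<and> (e j = 1 \<longleftrightarrow> j \<notin> word_Des n z)))"
proof -
  have j': "1 \<le> Suc j" "Suc j \<le> n" using j by auto
  have "z (int j) \<noteq> z (int j + 1)" using signed_perm_eq_iff[OF z] by simp
  then have "e j = e (Suc j) \<Longrightarrow>
      e j * z (int j) < e (Suc j) * z (int (Suc j)) \<longleftrightarrow> (e j = 1 \<longleftrightarrow> j \<notin> word_Des n z)"
    using labelling_sign[of j] j by (auto simp: word_Des_def add.commute)
  then show ?thesis
    using sgn_perm_of_labelling[of j] sgn_perm_of_labelling[OF j'] abs_perm_of_labelling[of j]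
      abs_perm_of_labelling[OF j'] position_less_iff[of j "Suc j"] j
    by (auto simp: same_sign_ascent_def add.commute)
qed

end

lemma labelling_of_perm_of_labelling:
  assumes z: "z \<in> signed_perms n" and ef: "(e, f) \<in> labellings"
  shows "labelling_of (perm_of_labelling z (e, f)) = (e, f)"
  using ef sgn_perm_of_labelling[OF z ef] abs_perm_of_labelling[OF z ef]
    block_start_position[OF z ef]
  by (auto simp: labelling_of_def labellings_def fun_eq_iff)

lemma perm_of_labelling_compatible:
  assumes z: "z \<in> signed_perms n" and ef: "(e, f) \<in> labellings"
  shows "perm_of_labelling z (e, f) \<in> compatible_perms z"
proof -
  let ?v = "perm_of_labelling z (e, f)" and ?p = "position z e f"
  have v: "?v \<in> signed_perms n" by (rule perm_of_labelling_signed_perm[OF z ef])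
  have u_at: "(z \<circ> inv ?v) (int (?p i)) = e i * z (int i)" if "1 \<le> i" "i \<le> n" for i
    using comp_inv_apply_abs[OF z v, of "int i"]
    unfolding abs_perm_of_labelling[OF z ef that] sgn_perm_of_labelling[OF z ef that] .
  have surj: "?p ` {1..n} = {1..n}" using position_bij[OF z ef] by (simp add: bij_betw_def)
  have "q \<in> J" if "q \<in> Des n (z \<circ> inv ?v)" for q
  proof (rule ccontr)
    assume qJ: "q \<notin> J"
    have q: "q < n" "(z \<circ> inv ?v) (int q + 1) < (z \<circ> inv ?v) (int q)"
      using that by (auto simp: Des_def)
    have "1 \<le> q" using qJ zero_mem by (cases q) auto
    with q(1) have "q \<in> ?p ` {1..n}" "Suc q \<in> ?p ` {1..n}" using surj by auto
    then obtain i i' where i: "i \<in> {1..n}" "q = ?p i" and i': "i' \<in> {1..n}" "Suc q = ?p i'"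
      by (meson imageE)
    have "f i = f i'"
      using block_start_position[OF z ef, of i] block_start_position[OF z ef, of i']
        block_start_Suc[OF \<open>1 \<le> q\<close> qJ] i i' by simp
    then have "e i * z (int i) < e i' * z (int i')"
      using position_less_iff[OF z ef, of i i'] i i' by simp
    moreover have "int (?p i') = int q + 1" using i'(2) by simp
    then have "(z \<circ> inv ?v) (int q + 1) = e i' * z (int i')" using u_at[of i'] i'(1) by simp
    moreover have "(z \<circ> inv ?v) (int q) = e i * z (int i)" using u_at[of i] i by simp
    ultimately show False using q(2) by simp
  qed
  then show ?thesis unfolding compatible_perms_def using v by auto
qed

lemma labelling_of_in_labellings:
  assumes v: "v \<in> signed_perms n"
  shows "labelling_of v \<in> labellings"
proof -
  let ?P = "\<lambda>i. nat \<bar>v (int i)\<bar>"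
  have P: "bij_betw ?P {1..n} {1..n}" by (rule signed_perm_abs_bij[OF v])
  have bounds: "1 \<le> ?P i" "v (int i) \<noteq> 0" if "1 \<le> i" "i \<le> n" for i
    using signed_perm_abs_bounds[OF v, of "int i"] that by auto
  show ?thesis
    unfolding labelling_of_def labellings_def
  proof (intro CollectI case_prodI conjI allI impI ballI)
    fix i assume i: "1 \<le> i \<and> i \<le> n"
    show "(if 1 \<le> i \<and> i \<le> n then sgn (v (int i)) else 0) = 1 \<or>
        (if 1 \<le> i \<and> i \<le> n then sgn (v (int i)) else 0) = -1"
      using i bounds[of i] by (auto simp: sgn_if)
    show "(if 1 \<le> i \<and> i \<le> n then block_start (?P i) else 0) \<in> J"
      using i bounds[of i] block_start_mem_less[of "?P i"] by auto
  next
    fix s assume s: "s \<in> J"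
    have "{i \<in> {1..n}. (if 1 \<le> i \<and> i \<le> n then block_start (?P i) else 0) = s} =
        {i \<in> {1..n}. block_start (?P i) = s}"
      by auto
    also have "card \<dots> = block_end s - s"
      using bij_betw_same_card[OF bij_betw_Collect[OF P, of "\<lambda>q. block_start q = s"]]
        card_block[OF s] by simp
    finally show "card {i \<in> {1..n}. (if 1 \<le> i \<and> i \<le> n then block_start (?P i) else 0) = s} =
        block_end s - s" .
  qed auto
qed

context
  fixes z v :: "int \<Rightarrow> int"
  assumes z: "z \<in> signed_perms n" and v: "v \<in> compatible_perms z"
begin

lemma compatible_increasing_in_block:
  assumes "s < k" "k < k'" "k' \<le> block_end s"
  shows "(z \<circ> inv v) (int k) < (z \<circ> inv v) (int k')"
proof (rule strict_mono_chain[of s "block_end s" "\<lambda>k. (z \<circ> inv v) (int k)", OF _ assms])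
  fix k assume k: "s < k" "k < block_end s"
  have u: "z \<circ> inv v \<in> signed_perms n"
    using v signed_perms_comp[OF z signed_perms_inv] by (simp add: compatible_perms_def)
  have "k \<notin> Des n (z \<circ> inv v)"
    using v not_mem_inside_block[OF k] by (auto simp: compatible_perms_def)
  moreover have "k < n" using k block_end_le[of s] by simp
  moreover have "(z \<circ> inv v) (int k) \<noteq> (z \<circ> inv v) (int k + 1)"
    using signed_perm_eq_iff[OF u] by simp
  ultimately show "(z \<circ> inv v) (int k) < (z \<circ> inv v) (int (Suc k))"
    by (auto simp: Des_def add.commute)
qed

lemma compatible_below_in_block:
  assumes s: "s \<in> J" "s < Q" "Q \<le> block_end s"
  shows "{q \<in> {1..n}. block_start q = s \<and> (z \<circ> inv v) (int q) < (z \<circ> inv v) (int Q)} = {s<..<Q}"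
proof (intro set_eqI iffI)
  fix q assume q: "q \<in> {q \<in> {1..n}. block_start q = s \<and> (z \<circ> inv v) (int q) < (z \<circ> inv v) (int Q)}"
  then have "s < q" "q \<le> block_end s" using block_start_eq_iff[OF s(1), of q] by auto
  moreover have "\<not> Q < q" "q \<noteq> Q"
    using q compatible_increasing_in_block[OF s(2), of q] \<open>q \<le> block_end s\<close> by auto
  ultimately show "q \<in> {s<..<Q}" by auto
next
  fix q assume "q \<in> {s<..<Q}"
  then show "q \<in> {q \<in> {1..n}. block_start q = s \<and> (z \<circ> inv v) (int q) < (z \<circ> inv v) (int Q)}"
    using compatible_increasing_in_block[of s q Q] block_start_eqI[OF s(1), of q] s
      block_end_le[of s] by auto
qed

lemma position_labelling_of:
  assumes ef: "labelling_of v = (e, f)" and i: "1 \<le> i" "i \<le> n"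
  shows "position z e f i = nat \<bar>v (int i)\<bar>"
proof -
  let ?P = "\<lambda>i. nat \<bar>v (int i)\<bar>" and ?u = "z \<circ> inv v"
  have vB: "v \<in> signed_perms n" using v by (simp add: compatible_perms_def)
  have P: "bij_betw ?P {1..n} {1..n}" by (rule signed_perm_abs_bij[OF vB])
  have P_bounds: "1 \<le> ?P j" "?P j \<le> n" if "1 \<le> j" "j \<le> n" for j
    using bij_betwE[OF P] that by auto
  have e: "e j = sgn (v (int j))" and f: "f j = block_start (?P j)" if "1 \<le> j" "j \<le> n" for j
    using ef that by (auto simp: labelling_of_def)
  have u_at: "e j * z (int j) = ?u (int (?P j))" if "1 \<le> j" "j \<le> n" for j
    using comp_inv_apply_abs[OF z vB, of "int j"] e[OF that] by simp
  let ?s = "f i"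
  have s: "?s \<in> J" "?s < ?P i" "?P i \<le> block_end ?s"
    using f[OF i] block_start_mem_less[OF P_bounds(1)[OF i]]
      le_block_end_block_start[OF P_bounds[OF i]]
    by auto
  have block_set: "{j \<in> {1..n}. f j = ?s \<and> e j * z (int j) < e i * z (int i)} =
      {j \<in> {1..n}. block_start (?P j) = ?s \<and> ?u (int (?P j)) < ?u (int (?P i))}"
    using f u_at i by auto
  have card_eq: "card {j \<in> {1..n}. block_start (?P j) = ?s \<and> ?u (int (?P j)) < ?u (int (?P i))} =
      card {q \<in> {1..n}. block_start q = ?s \<and> ?u (int q) < ?u (int (?P i))}"
    by (rule bij_betw_same_card[OF bij_betw_Collect[OF P]]) simp
  have below: "{q \<in> {1..n}. block_start q = ?s \<and> ?u (int q) < ?u (int (?P i))} = {?s<..<?P i}"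
    by (rule compatible_below_in_block[OF s])
  show ?thesis
    using s unfolding position_def block_set card_eq below by simp
qed

lemma perm_of_labelling_of: "perm_of_labelling z (labelling_of v) = v"
proof -
  obtain e f where ef: "labelling_of v = (e, f)" by fastforce
  have vB: "v \<in> signed_perms n" using v by (simp add: compatible_perms_def)
  have "perm_of_labelling z (e, f) = v"
  proof (rule signed_perm_eqI[OF perm_of_labelling_signed_perm[OF z] vB])
    show "(e, f) \<in> labellings" using labelling_of_in_labellings[OF vB] ef by simp
    fix i assume i: "1 \<le> i" "i \<le> n"
    have "e i = sgn (v (int i))" using ef i by (auto simp: labelling_of_def)
    then show "perm_of_labelling z (e, f) (int i) = v (int i)"
      using perm_of_labelling_apply[OF z \<open>(e, f) \<in> labellings\<close> i] position_labelling_of[OF ef i]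
      by (simp add: sgn_mult_abs)
  qed
  then show ?thesis using ef by simp
qed

end

lemma bij_betw_perm_of_labelling:
  assumes z: "z \<in> signed_perms n"
  shows "bij_betw (perm_of_labelling z) labellings (compatible_perms z)"
proof (rule bij_betwI')
  fix \<phi> \<psi> assume \<phi>: "\<phi> \<in> labellings" and \<psi>: "\<psi> \<in> labellings"
  show "perm_of_labelling z \<phi> = perm_of_labelling z \<psi> \<longleftrightarrow> \<phi> = \<psi>"
  proof
    assume eq: "perm_of_labelling z \<phi> = perm_of_labelling z \<psi>"
    have "\<phi> = labelling_of (perm_of_labelling z \<phi>)"
      using labelling_of_perm_of_labelling[OF z, of "fst \<phi>" "snd \<phi>"] \<phi> by simp
    also have "\<dots> = \<psi>"
      using eq labelling_of_perm_of_labelling[OF z, of "fst \<psi>" "snd \<psi>"] \<psi> by simp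
    finally show "\<phi> = \<psi>" .
  qed simp
next
  fix \<phi> assume "\<phi> \<in> labellings"
  then show "perm_of_labelling z \<phi> \<in> compatible_perms z"
    using perm_of_labelling_compatible[OF z, of "fst \<phi>" "snd \<phi>"] by simp
next
  fix v assume v: "v \<in> compatible_perms z"
  then have "labelling_of v \<in> labellings"
    using labelling_of_in_labellings by (simp add: compatible_perms_def)
  then show "\<exists>\<phi>\<in>labellings. v = perm_of_labelling z \<phi>"
    using perm_of_labelling_of[OF z v] by (intro bexI[of _ "labelling_of v"]) simp_all
qed

lemma gmult_XJ_eq_sum_labellings:
  assumes z: "z \<in> signed_perms n"
  shows "gmult n (XJ n J) y z = (\<Sum>\<phi>\<in>labellings. y (perm_of_labelling z \<phi>))"
  using gmult_XJ_apply[OF z] sum.reindex_bij_betw[OF bij_betw_perm_of_labelling[OF z], of y]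
  by (simp add: compatible_perms_def)

lemma shape_key_perm_of_labelling_eq:
  assumes z1: "z1 \<in> signed_perms n" and z2: "z2 \<in> signed_perms n"
    and D: "word_Des n z1 = word_Des n z2" and ef: "(e, f) \<in> labellings"
  shows "shape_key n (perm_of_labelling z1 (e, f)) = shape_key n (perm_of_labelling z2 (e, f))"
  unfolding shape_key_eq_iff
  using sgn_perm_of_labelling[OF z1 ef] sgn_perm_of_labelling[OF z2 ef]
    same_sign_ascent_perm_of_labelling_iff[OF z1 ef]
    same_sign_ascent_perm_of_labelling_iff[OF z2 ef] D
  by simp

lemma XJ_mult_invariant:
  assumes y: "y \<in> invariant_functions n (shape_key n)"
  shows "gmult n (XJ n J) y \<in> invariant_functions n (word_Des n)"
proof (rule invariant_functionsI)
  show "gmult n (XJ n J) y z = 0" if "z \<notin> signed_perms n" for z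
    using that by (rule gmult_outside)
  fix z1 z2 assume z1: "z1 \<in> signed_perms n" and z2: "z2 \<in> signed_perms n"
    and D: "word_Des n z1 = word_Des n z2"
  have "y (perm_of_labelling z1 \<phi>) = y (perm_of_labelling z2 \<phi>)" if "\<phi> \<in> labellings" for \<phi>
  proof (cases \<phi>)
    case (Pair e f)
    then have ef: "(e, f) \<in> labellings" using that by simp
    show ?thesis
      unfolding Pair
      by (rule invariant_functions_eq[OF y perm_of_labelling_signed_perm[OF z1 ef]
          perm_of_labelling_signed_perm[OF z2 ef]])
        (rule shape_key_perm_of_labelling_eq[OF z1 z2 D ef])
  qed
  then show "gmult n (XJ n J) y z1 = gmult n (XJ n J) y z2"
    unfolding gmult_XJ_eq_sum_labellings[OF z1] gmult_XJ_eq_sum_labellings[OF z2]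
    by (rule sum.cong[OF refl])
qed

definition positive_labelling :: "(nat \<Rightarrow> int) \<times> (nat \<Rightarrow> nat)" where
  "positive_labelling = ((\<lambda>i. if 1 \<le> i \<and> i \<le> n then 1 else 0), (\<lambda>_. 0))"

context
  assumes J: "J = {0}"
begin

lemma positive_labelling_in_labellings: "positive_labelling \<in> labellings"
proof -
  have no_later_block: "{j \<in> J. 0 < j} = {}" using J by auto
  have "block_end 0 = n" unfolding block_end_def no_later_block by simp
  moreover have "{i. 1 \<le> i \<and> i \<le> n} = {1..n}" by auto
  ultimately show ?thesis unfolding positive_labelling_def labellings_def using J by simp
qed

lemma positive_perm_of_labelling_iff:
  assumes z: "z \<in> signed_perms n" and \<phi>: "\<phi> \<in> labellings"
  shows "(\<forall>j. 1 \<le> j \<and> j \<le> n \<longrightarrow> 0 < perm_of_labelling z \<phi> (int j)) \<longleftrightarrow> \<phi> = positive_labelling"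
proof (cases \<phi>)
  case (Pair e f)
  then have ef: "(e, f) \<in> labellings" using \<phi> by simp
  have "f = (\<lambda>_. 0)" using ef J unfolding labellings_def by (auto simp: fun_eq_iff)
  moreover have "e i = 0" if "\<not> (1 \<le> i \<and> i \<le> n)" for i
    using ef that unfolding labellings_def by auto
  moreover have "0 < perm_of_labelling z (e, f) (int j) \<longleftrightarrow> e j = 1" if "1 \<le> j" "j \<le> n" for j
    using sgn_perm_of_labelling[OF z ef that] labelling_sign[OF z ef that]
    by (auto simp: sgn_1_pos sgn_1_neg)
  ultimately show ?thesis
    unfolding Pair positive_labelling_def by (auto simp: fun_eq_iff)
qed

lemma word_Des_perm_of_positive_labelling:
  assumes z: "z \<in> signed_perms n"
  shows "word_Des n (perm_of_labelling z positive_labelling) = word_Des n z"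
proof -
  obtain e f where ef: "positive_labelling = (e, f)" by fastforce
  have "e = (\<lambda>i. if 1 \<le> i \<and> i \<le> n then 1 else 0)" "f = (\<lambda>_. 0)"
    using ef by (simp_all add: positive_labelling_def)
  moreover have "(e, f) \<in> labellings" using positive_labelling_in_labellings ef by simp
  ultimately have "perm_of_labelling z (e, f) (int j + 1) < perm_of_labelling z (e, f) (int j) \<longleftrightarrow>
      z (int j + 1) < z (int j)" if "1 \<le> j" "j < n" for j
    using perm_of_labelling_apply[of z e f j] perm_of_labelling_apply[of z e f "Suc j"]
      position_less_iff[of z e f "Suc j" j] z that
    by (simp add: add.commute)
  then show ?thesis unfolding ef word_Des_def by auto
qed

end

end

definition positive_part :: "nat \<Rightarrow> gelem \<Rightarrow> gelem" where
  "positive_part n x =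
     (\<lambda>w. if w \<in> signed_perms n \<and> (\<forall>j. 1 \<le> j \<and> j \<le> n \<longrightarrow> 0 < w (int j)) then x w else 0)"

lemma positive_part_invariant:
  assumes x: "x \<in> invariant_functions n (shape_key n)"
  shows "positive_part n x \<in> invariant_functions n (shape_key n)"
proof (rule invariant_functionsI)
  fix w w' assume w: "w \<in> signed_perms n" "w' \<in> signed_perms n"
    and key: "shape_key n w = shape_key n w'"
  then have "0 < w (int j) \<longleftrightarrow> 0 < w' (int j)" if "1 \<le> j" "j \<le> n" for j
    using that unfolding shape_key_eq_iff by (metis sgn_greater)
  then show "positive_part n x w = positive_part n x w'"
    using invariant_functions_eq[OF x w key] w by (auto simp: positive_part_def)
qed (simp add: positive_part_def)

lemma XJ0_mult_positive_part:
  assumes n: "1 \<le> n" and x: "x \<in> invariant_functions n (word_Des n)"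
  shows "gmult n (XJ n {0}) (positive_part n x) = x"
proof
  interpret block_set n "{0}" by unfold_locales (use n in auto)
  fix z
  show "gmult n (XJ n {0}) (positive_part n x) z = x z"
  proof (cases "z \<in> signed_perms n")
    case False
    then show ?thesis by (simp add: gmult_outside invariant_functions_outside[OF x])
  next
    case z: True
    let ?v = "perm_of_labelling z positive_labelling"
    have "?v \<in> signed_perms n"
      using perm_of_labelling_signed_perm[OF z] positive_labelling_in_labellings[OF refl]
      by (cases positive_labelling) simp
    have "compatible_perms z \<subseteq> signed_perms n" by (auto simp: compatible_perms_def)
    then have "finite labellings"
      using bij_betw_finite[OF bij_betw_perm_of_labelling[OF z]] finite_signed_perms finite_subset
      by blast
    have "positive_part n x (perm_of_labelling z \<phi>) = (if \<phi> = positive_labelling then x ?v else 0)"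
      if "\<phi> \<in> labellings" for \<phi>
      using positive_perm_of_labelling_iff[OF refl z that] perm_of_labelling_signed_perm[OF z] that
      by (cases \<phi>) (auto simp: positive_part_def)
    then have "gmult n (XJ n {0}) (positive_part n x) z =
        (\<Sum>\<phi>\<in>labellings. if \<phi> = positive_labelling then x ?v else 0)"
      unfolding gmult_XJ_eq_sum_labellings[OF z] by (rule sum.cong[OF refl])
    also have "\<dots> = x ?v"
      using \<open>finite labellings\<close> positive_labelling_in_labellings[OF refl] by simp
    also have "\<dots> = x z"
      by (rule invariant_functions_eq[OF x \<open>?v \<in> signed_perms n\<close> z
            word_Des_perm_of_positive_labelling[OF refl z]])
    finally show ?thesis .
  qed
qed

lemma XJ_mult_Omega:
  assumes "0 \<in> J" "J \<subseteq> {0..<n}" and y: "y \<in> Omega n"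
  shows "gmult n (XJ n J) y \<in> I0 n"
proof -
  interpret block_set n J by unfold_locales (use assms in auto)
  have "1 \<le> n" using assms by auto
  with y show ?thesis
    using XJ_mult_invariant
    unfolding I0_eq_invariant_functions[OF \<open>1 \<le> n\<close>] Omega_eq_invariant_functions by blast
qed

lemma I0_mult_Omega:
  assumes x: "x \<in> I0 n" and y: "y \<in> Omega n"
  shows "gmult n x y \<in> I0 n"
proof -
  have "x \<in> gelem.span {XJ n J |J. J \<subseteq> {0..<n} \<and> 0 \<in> J}"
    using x unfolding I0_def qspan_eq_span .
  then show ?thesis
  proof (induction rule: gelem.span_induct_alt)
    case base
    then show ?case unfolding gmult_zero I0_def qspan_eq_span by (rule gelem.span_zero)
  next
    case (step c t x')
    then obtain J where "t = XJ n J" "J \<subseteq> {0..<n}" "0 \<in> J" by blast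
    then have "gmult n t y \<in> I0 n" using XJ_mult_Omega y by blast
    with step.IH show ?case
      unfolding gmult_scale_add I0_def qspan_eq_span by (intro gelem.span_add gelem.span_scale)
  qed
qed

lemma I0_eq_XJ0_mult_Omega:
  assumes n: "1 \<le> n"
  shows "I0 n = {gmult n (XJ n {0}) y |y. y \<in> Omega n}"
proof
  show "I0 n \<subseteq> {gmult n (XJ n {0}) y |y. y \<in> Omega n}"
  proof
    fix x assume "x \<in> I0 n"
    then have x: "x \<in> invariant_functions n (word_Des n)"
      using I0_eq_invariant_functions[OF n] by simp
    then have "positive_part n x \<in> Omega n"
      using I0_subset_Omega[OF n] positive_part_invariant
      unfolding I0_eq_invariant_functions[OF n] Omega_eq_invariant_functions by blast
    then show "x \<in> {gmult n (XJ n {0}) y |y. y \<in> Omega n}"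
      using XJ0_mult_positive_part[OF n x] by force
  qed
  show "{gmult n (XJ n {0}) y |y. y \<in> Omega n} \<subseteq> I0 n"
    using XJ_mult_Omega[of "{0}" n] n by auto
qed

theorem corollary7p7:
  fixes n :: nat
  assumes "n \<ge> 1"
  shows "I0 n \<subseteq> Omega n
    \<and> (\<forall>x\<in>I0 n. \<forall>y\<in>Omega n. gmult n x y \<in> I0 n)
    \<and> I0 n = {gmult n (XJ n {0}) y | y. y \<in> Omega n}"
  using I0_subset_Omega[OF assms] I0_mult_Omega I0_eq_XJ0_mult_Omega[OF assms] by blast

end
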